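(* For every combinatorial auction with SOS valuations and single-dimensional signals from a signal space of size $k\ge2$, i.e. $s_i\in\{0,1,\dots,k-1\}$ for all $i$, the mechanism $k$-HL is universally ex-post IC-IR and gives a $(k+3)$-approximation to the optimal social welfare: for every true profile $\mathbf{s}$, its expected welfare is at least $\frac{1}{k+3}\max_{T}\sum_i v_{iT_i}(\mathbf{s})$ over allocations $T$.
   Context: Setting: $n$ agents, $m$ items; agent $i$ has private signal $s_i\in\{0,\dots,k-1\}$; her value for bundle $T$ is $v_{iT}(\mathbf{s})\ge0$, public, weakly increasing in each coordinate, strictly in $s_i$; each $v_{iT}$ is SOS: for every coordinate $j$, $s_j$, $\delta\ge0$, $\mathbf{s}'_{-j}\le\mathbf{s}_{-j}$ coordinate-wise, $v(\mathbf{s}'_{-j},s_j+\delta)-v(\mathbf{s}'_{-j},s_j)\ge v(\mathbf{s}_{-j},s_j+\delta)-v(\mathbf{s}_{-j},s_j)$. Allocations assign disjoint bundles; agent utility is value of received bundle at the true profile minus payment; ex-post IC/IR and universal ex-post IC-IR as usual. Random Threshold (on reports $\mathbf{s}$): choose $\ell$ uniformly in $\{1,\dots,k-1\}$; $N_{\ge\ell}=\{i:s_i\ge\ell\}$, $N_{<\ell}$ the rest; for $i\in N_{\ge\ell}$, $\bar v_{iT}=v_{iT}(\mathbf{s}_{N_{<\ell}},\boldsymbol{\ell}_{N_{\ge\ell}})$, else $\bar v_{iT}=0$; allocate $\bar T\in\arg\max\sum_{i\in N_{\ge\ell}}\bar v_{i\bar T_i}$ among agents of $N_{\ge\ell}$;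 agent receiving $\bar T_i$ pays $v_{i\bar T_i}(\mathbf{s}_{-i},\ell-1)$. Random Sampling: split agents uniformly at random into $A,B$; for $i\in B$, $\tilde v_{iT}=v_{iT}(\mathbf{s}_A,\mathbf{0}_B)$, for $i\in A$, $\tilde v_{iT}=0$; allocate $\tilde T\in\arg\max\sum_{i\in B}\tilde v_{i\tilde T_i}$ among agents of $B$; no payments. $k$-HL: run Random Threshold with probability $\frac{k-1}{k+3}$, otherwise Random Sampling. *)

theory Defs
  imports "HOL-Probability.Probability_Mass_Function"
begin

(* Agents are 0..<n, items are 0..<m, signals are 0..<k.
   A signal profile is an element of the extensional function space below. *)

type_synonym profile = "nat \<Rightarrow> nat"

(* v i T s : value of agent i for bundle T at signal profile s *)
type_synonym valuations = "nat \<Rightarrow> nat set \<Rightarrow> profile \<Rightarrow> real"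

(* a deterministic mechanism: allocation rule (reports -> agent -> bundle) and
   payment rule (reports -> agent -> payment) *)
type_synonym mech = "(profile \<Rightarrow> nat \<Rightarrow> nat set) \<times> (profile \<Rightarrow> nat \<Rightarrow> real)"

definition profiles :: "nat \<Rightarrow> nat \<Rightarrow> profile set" where
  "profiles n k = PiE {..<n} (\<lambda>_. {..<k})"

definition val :: "valuations \<Rightarrow> nat \<Rightarrow> nat set \<Rightarrow> profile \<Rightarrow> real" where
  "val v i T s = (if T = {} then 0 else v i T s)"

definition SOS_valuations :: "nat \<Rightarrow> nat \<Rightarrow> nat \<Rightarrow> valuations \<Rightarrow> bool" where
  "SOS_valuations n m k v \<longleftrightarrow>
    (\<forall>i<n. \<forall>T. T \<noteq> {} \<and> T \<subseteq> {..<m} \<longrightarrow>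
       (\<forall>s\<in>profiles n k. 0 \<le> v i T s)
     \<and> (\<forall>s\<in>profiles n k. \<forall>j<n. \<forall>x<k. s j \<le> x \<longrightarrow> v i T s \<le> v i T (s(j := x)))
     \<and> (\<forall>s\<in>profiles n k. \<forall>x<k. s i < x \<longrightarrow> v i T s < v i T (s(i := x)))
     \<and> (\<forall>s\<in>profiles n k. \<forall>s'\<in>profiles n k. \<forall>j<n. \<forall>d. s j + d < k \<longrightarrow>
          (\<forall>l<n. l \<noteq> j \<longrightarrow> s' l \<le> s l) \<longrightarrow>
          v i T (s(j := s j + d)) - v i T s
            \<le> v i T (s'(j := s j + d)) - v i T (s'(j := s j))))"

definition allocs :: "nat set \<Rightarrow> nat \<Rightarrow> (nat \<Rightarrow> nat set) set" where
  "allocs N m = {T. (\<forall>i. T i \<subseteq> {..<m}) \<and> (\<forall>i. i \<notin> N \<longrightarrow> T i = {})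
                    \<and> (\<forall>i j. i \<noteq> j \<longrightarrow> T i \<inter> T j = {})}"

definition argmax_rule :: "nat \<Rightarrow> nat \<Rightarrow> (nat set \<Rightarrow> (nat \<Rightarrow> nat set \<Rightarrow> real) \<Rightarrow> nat \<Rightarrow> nat set) \<Rightarrow> bool" where
  "argmax_rule n m sel \<longleftrightarrow>
    (\<forall>N \<subseteq> {..<n}. \<forall>w. sel N w \<in> allocs N m \<and>
        (\<forall>T\<in>allocs N m. (\<Sum>i\<in>N. w i (T i)) \<le> (\<Sum>i\<in>N. w i (sel N w i))))"

definition RT_mech :: "nat \<Rightarrow> valuations \<Rightarrow> (nat set \<Rightarrow> (nat \<Rightarrow> nat set \<Rightarrow> real) \<Rightarrow> nat \<Rightarrow> nat set)
                        \<Rightarrow> nat \<Rightarrow> mech" where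
  "RT_mech n v sel l =
    (let alloc = (\<lambda>s. let Nge = {i. i < n \<and> l \<le> s i} in
                   sel Nge (\<lambda>i T. if i \<in> Nge
                                   then val v i T (\<lambda>j. if j \<in> Nge then l else s j) else 0))
     in (alloc, (\<lambda>s i. val v i (alloc s i) (s(i := l - 1)))))"

definition RS_mech :: "valuations \<Rightarrow> (nat set \<Rightarrow> (nat \<Rightarrow> nat set \<Rightarrow> real) \<Rightarrow> nat \<Rightarrow> nat set)
                        \<Rightarrow> nat set \<Rightarrow> mech" where
  "RS_mech v sel B =
    ((\<lambda>s. sel B (\<lambda>i T. if i \<in> B then val v i T (\<lambda>j. if j \<in> B then 0 else s j) else 0)),
     (\<lambda>s i. 0))"

definition RT :: "nat \<Rightarrow> nat \<Rightarrow> valuations \<Rightarrow> (nat set \<Rightarrow> (nat \<Rightarrow> nat set \<Rightarrow> real) \<Rightarrow> nat \<Rightarrow> nat set)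
                   \<Rightarrow> mech pmf" where
  "RT n k v sel = map_pmf (RT_mech n v sel) (pmf_of_set {1..<k})"

definition RS :: "nat \<Rightarrow> valuations \<Rightarrow> (nat set \<Rightarrow> (nat \<Rightarrow> nat set \<Rightarrow> real) \<Rightarrow> nat \<Rightarrow> nat set)
                   \<Rightarrow> mech pmf" where
  "RS n v sel = map_pmf (RS_mech v sel) (pmf_of_set (Pow {..<n}))"

definition kHL :: "nat \<Rightarrow> nat \<Rightarrow> valuations \<Rightarrow> (nat set \<Rightarrow> (nat \<Rightarrow> nat set \<Rightarrow> real) \<Rightarrow> nat \<Rightarrow> nat set)
                   \<Rightarrow> mech pmf" where
  "kHL n k v sel =
     bind_pmf (bernoulli_pmf ((real k - 1) / (real k + 3)))
              (\<lambda>b. if b then RT n k v sel else RS n v sel)"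

definition utility :: "valuations \<Rightarrow> mech \<Rightarrow> nat \<Rightarrow> profile \<Rightarrow> profile \<Rightarrow> real" where
  "utility v M i r s = val v i (fst M r i) s - snd M r i"

definition expost_IC_IR :: "nat \<Rightarrow> nat \<Rightarrow> valuations \<Rightarrow> mech \<Rightarrow> bool" where
  "expost_IC_IR n k v M \<longleftrightarrow>
    (\<forall>s\<in>profiles n k. \<forall>i<n. 0 \<le> utility v M i s s
        \<and> (\<forall>x<k. utility v M i (s(i := x)) s \<le> utility v M i s s))"

definition universal_expost_IC_IR :: "nat \<Rightarrow> nat \<Rightarrow> valuations \<Rightarrow> mech pmf \<Rightarrow> bool" where
  "universal_expost_IC_IR n k v D \<longleftrightarrow> (\<forall>M\<in>set_pmf D. expost_IC_IR n k v M)"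

definition welfare :: "nat \<Rightarrow> valuations \<Rightarrow> mech \<Rightarrow> profile \<Rightarrow> real" where
  "welfare n v M s = (\<Sum>i<n. val v i (fst M s i) s)"

definition OPT :: "nat \<Rightarrow> nat \<Rightarrow> valuations \<Rightarrow> profile \<Rightarrow> real" where
  "OPT n m v s = Max ((\<lambda>T. \<Sum>i<n. val v i (T i) s) ` allocs {..<n} m)"

end

theory Submission
  imports Defs
begin

text \<open>
  Fix an optimal allocation and let f be an agent i's value for her bundle in it; split
  f s = (f s - f (s(i := 0))) + f (s(i := 0)).
  Telescoping the first part over the thresholds l \<le> s i, SOS bounds each unit increase of the
  own signal by the value at the profile where every signal \<ge> l is lowered to l. These are the
  values that Random Threshold with threshold l maximises, so the first parts sum to at most the
  total welfare of RT over all l. For the second part, pairing a sample C of the other agents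
  with its complement, SOS gives f (s(i := 0)) \<le> f (0 on {i} \<union> C) + f (0 on the rest), so the
  samples containing i recover 2 ^ n f (s(i := 0)) / 4 under Random Sampling. The mixing
  probabilities (k - 1)/(k + 3) and 4/(k + 3) weight the two bounds equally.

  Incentives: in RT an agent's bundle depends on her report only through whether it reaches l,
  and she pays its value at own signal l - 1, which is below her true value exactly when her
  true signal reaches l; in RS the reports of allocated agents are ignored and nothing is paid.
\<close>

lemma profiles_iff:
  "s \<in> profiles n k \<longleftrightarrow> (\<forall>j<n. s j < k) \<and> (\<forall>j. n \<le> j \<longrightarrow> s j = undefined)"
  unfolding profiles_def PiE_iff extensional_def by auto

text \<open>The properties of SOS_valuations that every bundle value val v i T has, including the empty
  bundle.\<close>

definition SOS_function :: "nat \<Rightarrow> nat \<Rightarrow> (profile \<Rightarrow> real) \<Rightarrow> bool" where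
 "SOS_function n k f \<longleftrightarrow> (\<forall>s\<in>profiles n k. 0 \<le> f s)
     \<and> (\<forall>s\<in>profiles n k. \<forall>j<n. \<forall>x<k. s j \<le> x \<longrightarrow> f s \<le> f (s(j := x)))
     \<and> (\<forall>s\<in>profiles n k. \<forall>s'\<in>profiles n k. \<forall>j<n. \<forall>d. s j + d < k \<longrightarrow>
          (\<forall>l<n. l \<noteq> j \<longrightarrow> s' l \<le> s l) \<longrightarrow>
          f (s(j := s j + d)) - f s \<le> f (s'(j := s j + d)) - f (s'(j := s j)))"

lemma SOS_function_nonneg: "SOS_function n k f \<Longrightarrow> s \<in> profiles n k \<Longrightarrow> 0 \<le> f s"
  unfolding SOS_function_def by blast

lemma SOS_function_mono_coord:
  "SOS_function n k f \<Longrightarrow> s \<in> profiles n k \<Longrightarrow> j < n \<Longrightarrow> x < k \<Longrightarrow> s j \<le> x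
   \<Longrightarrow> f s \<le> f (s(j := x))"
  unfolding SOS_function_def by blast

lemma SOS_function_increment_le:
  "SOS_function n k f \<Longrightarrow> s \<in> profiles n k \<Longrightarrow> s' \<in> profiles n k \<Longrightarrow> j < n
   \<Longrightarrow> s j + d < k \<Longrightarrow> (\<forall>l<n. l \<noteq> j \<longrightarrow> s' l \<le> s l)
   \<Longrightarrow> f (s(j := s j + d)) - f s \<le> f (s'(j := s j + d)) - f (s'(j := s j))"
  unfolding SOS_function_def by blast

lemma SOS_function_val:
  assumes "SOS_valuations n m k v" "i < n" "T \<subseteq> {..<m}"
  shows "SOS_function n k (val v i T)"
proof (cases "T = {}")
  case True
  then show ?thesis by (simp add: SOS_function_def val_def)
next
  case False
  then show ?thesis
    using assms unfolding SOS_valuations_def SOS_function_def val_def by simp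
qed

lemma SOS_function_mono_on:
  assumes f: "SOS_function n k f" and "finite D" "D \<subseteq> {..<n}"
    and "p \<in> profiles n k" "q \<in> profiles n k"
    and "\<forall>j<n. p j \<le> q j" "\<forall>j. j \<notin> D \<longrightarrow> p j = q j"
  shows "f p \<le> f q"
  using assms(2-)
proof (induction D arbitrary: p rule: finite_induct)
  case empty
  then have "p = q" by (simp add: fun_eq_iff)
  then show ?case by simp
next
  case (insert d D)
  have d: "d < n" using insert.prems by auto
  have "f p \<le> f (p(d := q d))"
    using SOS_function_mono_coord[OF f _ d] insert.prems d by (auto simp: profiles_iff)
  also have "\<dots> \<le> f q"
    using insert.prems d by (intro insert.IH) (auto simp: profiles_iff)
  finally show ?case .
qed

lemma SOS_function_mono:
  assumes "SOS_function n k f" "p \<in> profiles n k" "q \<in> profiles n k" "\<forall>j<n. p j \<le> q j"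
  shows "f p \<le> f q"
  using SOS_function_mono_on[of n k f "{..<n}" p q] assms by (auto simp: profiles_iff)

lemma SOS_function_set_increment_le:
  assumes f: "SOS_function n k f" and hi: "hi \<in> profiles n k" and D: "D \<subseteq> {..<n}"
    and "p \<in> profiles n k" "p' \<in> profiles n k" "\<forall>j<n. p' j \<le> p j"
    and "\<forall>j\<in>D. p' j = p j \<and> p j \<le> hi j"
  shows "f (\<lambda>j. if j \<in> D then hi j else p j) - f p
       \<le> f (\<lambda>j. if j \<in> D then hi j else p' j) - f p'"
proof -
  have "finite D" using D finite_subset by blast
  then show ?thesis using D assms(4-)
  proof (induction D arbitrary: p p' rule: finite_induct)
    case empty
    then show ?case by simp
  next
    case (insert d D)
    define q where "q = (\<lambda>j. if j \<in> D then hi j else p j)"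
    define q' where "q' = (\<lambda>j. if j \<in> D then hi j else p' j)"
    have d: "d < n" using insert.prems by auto
    have q: "q \<in> profiles n k" and q': "q' \<in> profiles n k"
      using insert.prems hi by (auto simp: profiles_iff q_def q'_def)
    have qd: "q d = p d" "q' d = p d" using insert.hyps insert.prems by (auto simp: q_def q'_def)
    have raised: "q d + (hi d - p d) = hi d" using qd insert.prems by auto
    have "q'(d := q d) = q'" using qd by auto
    moreover have "\<forall>l<n. l \<noteq> d \<longrightarrow> q' l \<le> q l" using insert.prems by (auto simp: q_def q'_def)
    moreover have "hi d < k" using hi d by (auto simp: profiles_iff)
    ultimately have "f (q(d := hi d)) - f q \<le> f (q'(d := hi d)) - f q'"
      using SOS_function_increment_le[OF f q q' d, of "hi d - p d"] raised by simp
    moreover have "f q - f p \<le> f q' - f p'"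
      unfolding q_def q'_def using insert.prems by (intro insert.IH) auto
    moreover have "(\<lambda>j. if j \<in> insert d D then hi j else p j) = q(d := hi d)"
      "(\<lambda>j. if j \<in> insert d D then hi j else p' j) = q'(d := hi d)"
      by (auto simp: q_def q'_def)
    ultimately show ?case by simp
  qed
qed

lemma SOS_function_own_gain_le_threshold_sum:
  assumes f: "SOS_function n k f" and s: "s \<in> profiles n k" and i: "i < n"
  shows "f s - f (s(i := 0)) \<le>
    (\<Sum>l\<in>{1..<k}. if l \<le> s i then f (\<lambda>j. if j < n \<and> l \<le> s j then l else s j) else 0)"
proof -
  define q where "q l = (\<lambda>j. if j < n \<and> l \<le> s j then l else s j)" for l
  have sik: "s i < k" using s i by (auto simp: profiles_iff)
  have step: "f (s(i := Suc l)) - f (s(i := l)) \<le> f (q (Suc l))" if l: "l < s i" for l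
  proof -
    have sl: "s(i := l) \<in> profiles n k" and ql: "q (Suc l) \<in> profiles n k"
      using s i sik l by (auto simp: profiles_iff q_def)
    have "f (s(i := l + 1)) - f (s(i := l)) \<le> f ((q (Suc l))(i := l + 1)) - f ((q (Suc l))(i := l))"
      using SOS_function_increment_le[OF f sl ql i, of 1] l sik by (auto simp: q_def)
    moreover have "(q (Suc l))(i := l + 1) = q (Suc l)" using l i by (auto simp: q_def)
    moreover have "0 \<le> f ((q (Suc l))(i := l))"
      using SOS_function_nonneg[OF f] ql i sik l by (auto simp: profiles_iff)
    ultimately show ?thesis by simp
  qed
  have "f s - f (s(i := 0)) = (\<Sum>l<s i. f (s(i := Suc l)) - f (s(i := l)))"
    using sum_lessThan_telescope[of "\<lambda>l. f (s(i := l))" "s i"] by simp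
  also have "\<dots> \<le> (\<Sum>l<s i. f (q (Suc l)))" by (rule sum_mono) (use step in auto)
  also have "\<dots> = (\<Sum>l\<in>{1..s i}. f (q l))" by (simp add: sum.atLeast1_atMost_eq)
  also have "\<dots> = (\<Sum>l\<in>{l \<in> {1..<k}. l \<le> s i}. f (q l))"
    using sik by (intro sum.cong) auto
  also have "\<dots> = (\<Sum>l\<in>{1..<k}. if l \<le> s i then f (q l) else 0)" by (rule sum.inter_filter) simp
  finally show ?thesis unfolding q_def .
qed

lemma SOS_function_le_complementary_samples:
  assumes f: "SOS_function n k f" and s: "s \<in> profiles n k" and i: "i < n"
    and C: "C \<subseteq> {..<n} - {i}"
  shows "f (s(i := 0)) \<le> f (\<lambda>j. if j \<in> insert i C then 0 else s j)
                       + f (\<lambda>j. if j \<in> insert i ({..<n} - {i} - C) then 0 else s j)"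
proof -
  define p where "p = (\<lambda>j. if j \<in> insert i C then 0 else s j)"
  define z :: profile where "z = (\<lambda>j. if j < n then 0 else undefined)"
  have k: "0 < k" using s i by (auto simp: profiles_iff)
  have p: "p \<in> profiles n k" and z: "z \<in> profiles n k"
    using s k C i by (auto simp: profiles_iff p_def z_def)
  txt \<open>Raising the signals in C to s gains more from the all-zero profile z than from p.\<close>
  have "f (\<lambda>j. if j \<in> C then s j else p j) - f p \<le> f (\<lambda>j. if j \<in> C then s j else z j) - f z"
    using C by (intro SOS_function_set_increment_le[OF f s _ p z]) (auto simp: p_def z_def)
  moreover have "(\<lambda>j. if j \<in> C then s j else p j) = s(i := 0)" using C by (auto simp: p_def fun_eq_iff)
  moreover have "(\<lambda>j. if j \<in> C then s j else z j)
      = (\<lambda>j. if j \<in> insert i ({..<n} - {i} - C) then 0 else s j)"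
    using C s i by (auto simp: z_def profiles_iff fun_eq_iff)
  moreover have "0 \<le> f z" using SOS_function_nonneg[OF f z] .
  ultimately show ?thesis unfolding p_def by simp
qed

lemma SOS_function_le_sample_sum:
  assumes f: "SOS_function n k f" and s: "s \<in> profiles n k" and i: "i < n"
  shows "2 ^ n * f (s(i := 0)) \<le>
    4 * (\<Sum>B\<in>Pow {..<n}. if i \<in> B then f (\<lambda>j. if j \<in> B then 0 else s j) else 0)"
proof -
  define Oth where "Oth = {..<n} - {i}"
  define h where "h C = f (\<lambda>j. if j \<in> insert i C then 0 else s j)" for C
  have "(\<Sum>B\<in>Pow {..<n}. if i \<in> B then f (\<lambda>j. if j \<in> B then 0 else s j) else 0)
      = (\<Sum>B\<in>{B \<in> Pow {..<n}. i \<in> B}. f (\<lambda>j. if j \<in> B then 0 else s j))"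
    by (rule sum.inter_filter[symmetric]) simp
  also have "\<dots> = (\<Sum>C\<in>Pow Oth. h C)"
    unfolding h_def Oth_def using i
    by (intro sum.reindex_bij_witness[of _ "insert i" "\<lambda>B. B - {i}"]) (auto simp: insert_absorb)
  finally have samples: "(\<Sum>B\<in>Pow {..<n}. if i \<in> B then f (\<lambda>j. if j \<in> B then 0 else s j) else 0)
      = (\<Sum>C\<in>Pow Oth. h C)" .
  have complement: "(\<Sum>C\<in>Pow Oth. h (Oth - C)) = (\<Sum>C\<in>Pow Oth. h C)"
    by (rule sum.reindex_bij_witness[of _ "\<lambda>C. Oth - C" "\<lambda>C. Oth - C"]) auto
  have "2 ^ (n - 1) * f (s(i := 0)) = (\<Sum>C\<in>Pow Oth. f (s(i := 0)))"
    using i by (simp add: Oth_def card_Pow card_Diff_singleton)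
  also have "\<dots> \<le> (\<Sum>C\<in>Pow Oth. h C + h (Oth - C))"
    unfolding h_def Oth_def
    by (intro sum_mono SOS_function_le_complementary_samples[OF f s i]) auto
  also have "\<dots> = 2 * (\<Sum>C\<in>Pow Oth. h C)" by (simp add: sum.distrib complement)
  finally have "2 * (2 ^ (n - 1) * f (s(i := 0))) \<le> 4 * (\<Sum>C\<in>Pow Oth. h C)" by linarith
  moreover have "(2::real) ^ n = 2 * 2 ^ (n - 1)" using i power_Suc[of "2::real" "n - 1"] by simp
  ultimately show ?thesis unfolding samples by simp
qed

lemma argmax_rule_allocs:
  "argmax_rule n m sel \<Longrightarrow> N \<subseteq> {..<n} \<Longrightarrow> sel N w \<in> allocs N m"
  unfolding argmax_rule_def by blast

lemma argmax_rule_optimal: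
  "argmax_rule n m sel \<Longrightarrow> N \<subseteq> {..<n} \<Longrightarrow> T \<in> allocs N m
   \<Longrightarrow> (\<Sum>i\<in>N. w i (T i)) \<le> (\<Sum>i\<in>N. w i (sel N w i))"
  unfolding argmax_rule_def by blast

lemma welfare_argmax_at_lower_profile_ge:
  assumes sos: "SOS_valuations n m k v" and am: "argmax_rule n m sel" and N: "N \<subseteq> {..<n}"
    and q: "q \<in> profiles n k" and s: "s \<in> profiles n k" and le: "\<forall>j<n. q j \<le> s j"
    and T: "T \<in> allocs {..<n} m"
  shows "(\<Sum>i\<in>N. val v i (T i) q)
       \<le> (\<Sum>i<n. val v i (sel N (\<lambda>i T. if i \<in> N then val v i T q else 0) i) s)"
proof -
  define w where "w = (\<lambda>i T. if i \<in> N then val v i T q else 0)"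
  define S where "S = sel N w"
  have S_bundles: "S i \<subseteq> {..<m}" for i
    using argmax_rule_allocs[OF am N] by (simp add: S_def allocs_def)
  have restrict: "(\<lambda>i. if i \<in> N then T i else {}) \<in> allocs N m"
    using T unfolding allocs_def by auto
  have "(\<Sum>i\<in>N. val v i (T i) q) = (\<Sum>i\<in>N. w i (if i \<in> N then T i else {}))"
    by (simp add: w_def)
  also have "\<dots> \<le> (\<Sum>i\<in>N. w i (S i))"
    unfolding S_def by (rule argmax_rule_optimal[OF am N restrict])
  also have "\<dots> = (\<Sum>i\<in>N. val v i (S i) q)" by (simp add: w_def)
  also have "\<dots> \<le> (\<Sum>i\<in>N. val v i (S i) s)"
    using N by (intro sum_mono SOS_function_mono[OF SOS_function_val[OF sos _ S_bundles] q s le]) auto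
  also have "\<dots> \<le> (\<Sum>i<n. val v i (S i) s)"
    using N SOS_function_nonneg[OF SOS_function_val[OF sos _ S_bundles] s] by (intro sum_mono2) auto
  finally show ?thesis unfolding S_def w_def .
qed

lemma welfare_RT_mech_ge:
  assumes sos: "SOS_valuations n m k v" and am: "argmax_rule n m sel"
    and s: "s \<in> profiles n k" and l: "l < k" and T: "T \<in> allocs {..<n} m"
  shows "(\<Sum>i<n. if l \<le> s i then val v i (T i) (\<lambda>j. if j < n \<and> l \<le> s j then l else s j) else 0)
    \<le> welfare n v (RT_mech n v sel l) s"
proof -
  define N where "N = {i. i < n \<and> l \<le> s i}"
  define q where "q = (\<lambda>j. if j \<in> N then l else s j)"
  have "(\<Sum>i<n. if l \<le> s i then val v i (T i) (\<lambda>j. if j < n \<and> l \<le> s j then l else s j) else 0)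
      = (\<Sum>i\<in>N. val v i (T i) q)"
    unfolding N_def q_def by (subst sum.inter_filter[symmetric]) (auto intro: sum.cong)
  also have "\<dots> \<le> (\<Sum>i<n. val v i (sel N (\<lambda>i T. if i \<in> N then val v i T q else 0) i) s)"
    using s l by (intro welfare_argmax_at_lower_profile_ge[OF sos am _ _ s _ T])
      (auto simp: N_def q_def profiles_iff)
  also have "\<dots> = welfare n v (RT_mech n v sel l) s"
    unfolding welfare_def RT_mech_def Let_def N_def q_def by simp
  finally show ?thesis .
qed

lemma welfare_RS_mech_ge:
  assumes sos: "SOS_valuations n m k v" and am: "argmax_rule n m sel"
    and s: "s \<in> profiles n k" and B: "B \<subseteq> {..<n}" and T: "T \<in> allocs {..<n} m"
  shows "(\<Sum>i<n. if i \<in> B then val v i (T i) (\<lambda>j. if j \<in> B then 0 else s j) else 0)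
    \<le> welfare n v (RS_mech v sel B) s"
proof -
  have "(\<Sum>i<n. if i \<in> B then val v i (T i) (\<lambda>j. if j \<in> B then 0 else s j) else 0)
      = (\<Sum>i\<in>B. val v i (T i) (\<lambda>j. if j \<in> B then 0 else s j))"
    using B by (subst sum.inter_filter[symmetric]) (auto intro: sum.cong)
  also have "\<dots> \<le> welfare n v (RS_mech v sel B) s"
    unfolding welfare_def RS_mech_def fst_conv
    using s B by (intro welfare_argmax_at_lower_profile_ge[OF sos am B _ s _ T])
      (auto simp: profiles_iff intro: le_less_trans)
  finally show ?thesis .
qed

lemma RT_mech_alloc_below_threshold:
  assumes "argmax_rule n m sel" and "\<not> l \<le> r i"
  shows "fst (RT_mech n v sel l) r i = {}"
proof -
  have "fst (RT_mech n v sel l) r \<in> allocs {i. i < n \<and> l \<le> r i} m"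
    unfolding RT_mech_def Let_def fst_conv by (rule argmax_rule_allocs[OF assms(1)]) auto
  then show ?thesis using assms(2) by (simp add: allocs_def)
qed

lemma RT_mech_alloc_above_threshold:
  assumes "i < n" "l \<le> x" "l \<le> y"
  shows "fst (RT_mech n v sel l) (s(i := x)) = fst (RT_mech n v sel l) (s(i := y))"
proof -
  define N where "N = {j. j < n \<and> l \<le> (s(i := y)) j}"
  have "{j. j < n \<and> l \<le> (s(i := x)) j} = N" using assms by (auto simp: N_def)
  moreover have "(\<lambda>j. if j \<in> N then l else (s(i := x)) j) = (\<lambda>j. if j \<in> N then l else (s(i := y)) j)"
    using assms by (auto simp: N_def)
  ultimately show ?thesis unfolding RT_mech_def Let_def fst_conv N_def[symmetric] by (simp only:)
qed

lemma RT_mech_payment: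
  "snd (RT_mech n v sel l) r i = val v i (fst (RT_mech n v sel l) r i) (r(i := l - 1))"
  unfolding RT_mech_def Let_def by simp

lemma RT_mech_utility:
  assumes "argmax_rule n m sel" "i < n" and T: "T = fst (RT_mech n v sel l) (s(i := l)) i"
  shows "utility v (RT_mech n v sel l) i (s(i := x)) s
       = (if l \<le> x then val v i T s - val v i T (s(i := l - 1)) else 0)"
proof (cases "l \<le> x")
  case True
  have "fst (RT_mech n v sel l) (s(i := x)) i = T"
    unfolding T by (rule fun_cong[OF RT_mech_alloc_above_threshold[OF assms(2) True order_refl]])
  then show ?thesis using True by (simp add: utility_def RT_mech_payment)
next
  case False
  have "fst (RT_mech n v sel l) (s(i := x)) i = {}"
    by (rule RT_mech_alloc_below_threshold[OF assms(1)]) (use False in simp)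
  then show ?thesis using False by (simp add: utility_def RT_mech_payment val_def)
qed

lemma RT_mech_expost_IC_IR:
  assumes sos: "SOS_valuations n m k v" and am: "argmax_rule n m sel" and l: "l < k"
  shows "expost_IC_IR n k v (RT_mech n v sel l)"
  unfolding expost_IC_IR_def
proof (intro ballI allI impI conjI)
  fix s i assume s: "s \<in> profiles n k" and i: "i < n"
  define T where "T = fst (RT_mech n v sel l) (s(i := l)) i"
  define gain where "gain = val v i T s - val v i T (s(i := l - 1))"
  have u: "utility v (RT_mech n v sel l) i (s(i := x)) s = (if l \<le> x then gain else 0)" for x
    unfolding gain_def by (rule RT_mech_utility[OF am i T_def])
  have "fst (RT_mech n v sel l) (s(i := l)) \<in> allocs {j. j < n \<and> l \<le> (s(i := l)) j} m"
    unfolding RT_mech_def Let_def fst_conv by (rule argmax_rule_allocs[OF am]) auto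
  then have f: "SOS_function n k (val v i T)"
    unfolding T_def by (intro SOS_function_val[OF sos i]) (simp add: allocs_def)
  have sl: "s(i := l - 1) \<in> profiles n k" using s i l by (auto simp: profiles_iff)
  have "l \<le> s i \<Longrightarrow> val v i T (s(i := l - 1)) \<le> val v i T s"
    by (rule SOS_function_mono[OF f sl s]) auto
  moreover have "s i < l \<Longrightarrow> val v i T s \<le> val v i T (s(i := l - 1))"
    by (rule SOS_function_mono[OF f s sl]) auto
  ultimately have gain_sign: "(l \<le> s i \<longrightarrow> 0 \<le> gain) \<and> (s i < l \<longrightarrow> gain \<le> 0)"
    unfolding gain_def by auto
  have truthful: "utility v (RT_mech n v sel l) i s s = (if l \<le> s i then gain else 0)"
    using u[of "s i"] by simp
  show "0 \<le> utility v (RT_mech n v sel l) i s s"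
    using truthful gain_sign by simp
  fix x
  show "utility v (RT_mech n v sel l) i (s(i := x)) s \<le> utility v (RT_mech n v sel l) i s s"
    unfolding u truthful using gain_sign by auto
qed

lemma RS_mech_expost_IC_IR:
  assumes sos: "SOS_valuations n m k v" and am: "argmax_rule n m sel" and B: "B \<subseteq> {..<n}"
  shows "expost_IC_IR n k v (RS_mech v sel B)"
  unfolding expost_IC_IR_def
proof (intro ballI allI impI conjI)
  fix s i assume s: "s \<in> profiles n k" and i: "i < n"
  have bundles: "fst (RS_mech v sel B) r \<in> allocs B m" for r
    unfolding RS_mech_def fst_conv by (rule argmax_rule_allocs[OF am B])
  then have f: "SOS_function n k (val v i (fst (RS_mech v sel B) r i))" for r
    by (intro SOS_function_val[OF sos i]) (simp add: allocs_def)
  show "0 \<le> utility v (RS_mech v sel B) i s s"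
    using SOS_function_nonneg[OF f s] by (simp add: utility_def RS_mech_def)
  fix x
  have "fst (RS_mech v sel B) (s(i := x)) i = fst (RS_mech v sel B) s i"
  proof (cases "i \<in> B")
    case True
    then have "(\<lambda>j. if j \<in> B then 0 else (s(i := x)) j) = (\<lambda>j. if j \<in> B then 0 else s j)"
      by auto
    then show ?thesis unfolding RS_mech_def fst_conv by (simp only:)
  next
    case False
    then show ?thesis using bundles[of s] bundles[of "s(i := x)"] by (simp add: allocs_def)
  qed
  then show "utility v (RS_mech v sel B) i (s(i := x)) s \<le> utility v (RS_mech v sel B) i s s"
    by (simp add: utility_def RS_mech_def)
qed

lemma set_pmf_RT: "k \<ge> 2 \<Longrightarrow> set_pmf (RT n k v sel) = RT_mech n v sel ` {1..<k}"
  by (simp add: RT_def)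

lemma set_pmf_RS: "set_pmf (RS n v sel) = RS_mech v sel ` Pow {..<n}"
  unfolding RS_def using finite_Pow_iff[of "{..<n}"] Pow_not_empty[of "{..<n}"] by simp

lemma set_pmf_kHL:
  "k \<ge> 2 \<Longrightarrow> set_pmf (kHL n k v sel) \<subseteq> RT_mech n v sel ` {1..<k} \<union> RS_mech v sel ` Pow {..<n}"
  by (auto simp: kHL_def set_pmf_RT set_pmf_RS split: if_splits)

lemma kHL_universal_expost_IC_IR:
  assumes "k \<ge> 2" "SOS_valuations n m k v" "argmax_rule n m sel"
  shows "universal_expost_IC_IR n k v (kHL n k v sel)"
  unfolding universal_expost_IC_IR_def
proof
  fix M assume "M \<in> set_pmf (kHL n k v sel)"
  then have "M \<in> RT_mech n v sel ` {1..<k} \<union> RS_mech v sel ` Pow {..<n}"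
    using set_pmf_kHL[OF assms(1)] by blast
  then show "expost_IC_IR n k v M"
    using RT_mech_expost_IC_IR[OF assms(2,3)] RS_mech_expost_IC_IR[OF assms(2,3)] by auto
qed

lemma expectation_kHL:
  fixes W :: "mech \<Rightarrow> real"
  assumes k: "k \<ge> 2"
  shows "measure_pmf.expectation (kHL n k v sel) W
    = ((\<Sum>l\<in>{1..<k}. W (RT_mech n v sel l)) + 4 * (\<Sum>B\<in>Pow {..<n}. W (RS_mech v sel B)) / 2 ^ n)
      / (real k + 3)"
proof -
  define p where "p = (real k - 1) / (real k + 3)"
  define ERT where "ERT = (\<Sum>l\<in>{1..<k}. W (RT_mech n v sel l))"
  define ERS where "ERS = (\<Sum>B\<in>Pow {..<n}. W (RS_mech v sel B)) / 2 ^ n"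
  have p: "0 \<le> p" "p \<le> 1" using k by (auto simp: p_def)
  have RT: "measure_pmf.expectation (RT n k v sel) W = ERT / (real k - 1)"
    unfolding RT_def ERT_def using k by (simp add: integral_pmf_of_set of_nat_diff)
  have RS: "measure_pmf.expectation (RS n v sel) W = ERS"
    unfolding RS_def ERS_def using finite_Pow_iff[of "{..<n}"] Pow_not_empty[of "{..<n}"]
    by (simp add: integral_pmf_of_set card_Pow)
  have "measure_pmf.expectation (kHL n k v sel) W
      = p * measure_pmf.expectation (RT n k v sel) W + (1 - p) * measure_pmf.expectation (RS n v sel) W"
    unfolding kHL_def p_def[symmetric] using p k
    by (subst pmf_expectation_bind[where A = UNIV]) (auto simp: set_pmf_RT set_pmf_RS UNIV_bool)
  moreover have "p * (ERT / (real k - 1)) = ERT / (real k + 3)" using k by (simp add: p_def)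
  moreover have "1 - p = 4 / (real k + 3)" using k by (simp add: p_def field_simps)
  ultimately show ?thesis unfolding RT RS ERT_def[symmetric] by (simp add: ERS_def add_divide_distrib)
qed

lemma OPT_attained: "\<exists>T\<in>allocs {..<n} m. OPT n m v s = (\<Sum>i<n. val v i (T i) s)"
proof -
  have "finite {T. \<forall>i. (i \<in> {..<n} \<longrightarrow> T i \<in> Pow {..<m}) \<and> (i \<notin> {..<n} \<longrightarrow> T i = {})}"
    by (rule finite_set_of_finite_funs) auto
  then have "finite (allocs {..<n} m)" by (rule finite_subset[rotated]) (auto simp: allocs_def)
  moreover have "(\<lambda>_. {}) \<in> allocs {..<n} m" unfolding allocs_def by auto
  ultimately show ?thesis unfolding OPT_def using Max_in[of "(\<lambda>T. \<Sum>i<n. val v i (T i) s) ` allocs {..<n} m"]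
    by blast
qed

lemma OPT_le_threshold_plus_sampling_welfare:
  assumes sos: "SOS_valuations n m k v" and am: "argmax_rule n m sel" and s: "s \<in> profiles n k"
  shows "OPT n m v s \<le> (\<Sum>l\<in>{1..<k}. welfare n v (RT_mech n v sel l) s)
                        + 4 * (\<Sum>B\<in>Pow {..<n}. welfare n v (RS_mech v sel B) s) / 2 ^ n"
proof -
  obtain T where T: "T \<in> allocs {..<n} m" and OPT: "OPT n m v s = (\<Sum>i<n. val v i (T i) s)"
    using OPT_attained by blast
  define f where "f i = val v i (T i)" for i
  have f: "SOS_function n k (f i)" if "i < n" for i
    unfolding f_def using T by (intro SOS_function_val[OF sos that]) (simp add: allocs_def)
  have "(\<Sum>i<n. f i s - f i (s(i := 0)))
      \<le> (\<Sum>i<n. \<Sum>l\<in>{1..<k}. if l \<le> s i then f i (\<lambda>j. if j < n \<and> l \<le> s j then l else s j) else 0)"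
    by (intro sum_mono SOS_function_own_gain_le_threshold_sum[OF f s]) simp_all
  also have "\<dots> = (\<Sum>l\<in>{1..<k}. \<Sum>i<n. if l \<le> s i then f i (\<lambda>j. if j < n \<and> l \<le> s j then l else s j) else 0)"
    by (rule sum.swap)
  also have "\<dots> \<le> (\<Sum>l\<in>{1..<k}. welfare n v (RT_mech n v sel l) s)"
    unfolding f_def by (intro sum_mono welfare_RT_mech_ge[OF sos am s _ T]) simp
  finally have threshold: "(\<Sum>i<n. f i s - f i (s(i := 0)))
      \<le> (\<Sum>l\<in>{1..<k}. welfare n v (RT_mech n v sel l) s)" .
  have "(\<Sum>i<n. f i (s(i := 0)))
      \<le> (\<Sum>i<n. 4 * (\<Sum>B\<in>Pow {..<n}. if i \<in> B then f i (\<lambda>j. if j \<in> B then 0 else s j) else 0) / 2 ^ n)"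
    using SOS_function_le_sample_sum[OF f s] by (intro sum_mono) (simp add: pos_le_divide_eq mult.commute)
  also have "\<dots> = 4 * (\<Sum>B\<in>Pow {..<n}. \<Sum>i<n. if i \<in> B then f i (\<lambda>j. if j \<in> B then 0 else s j) else 0) / 2 ^ n"
    by (simp add: sum_divide_distrib sum_distrib_left sum.swap[of _ "{..<n}"])
  also have "\<dots> \<le> 4 * (\<Sum>B\<in>Pow {..<n}. welfare n v (RS_mech v sel B) s) / 2 ^ n"
    unfolding f_def by (intro divide_right_mono mult_left_mono sum_mono welfare_RS_mech_ge[OF sos am s _ T]) auto
  finally have sampling: "(\<Sum>i<n. f i (s(i := 0)))
      \<le> 4 * (\<Sum>B\<in>Pow {..<n}. welfare n v (RS_mech v sel B) s) / 2 ^ n" .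
  have "OPT n m v s = (\<Sum>i<n. f i s - f i (s(i := 0))) + (\<Sum>i<n. f i (s(i := 0)))"
    unfolding OPT f_def by (simp add: sum.distrib[symmetric])
  then show ?thesis using threshold sampling by linarith
qed

theorem mainTheorem8:
  fixes n m k :: nat and v :: valuations
    and sel :: "nat set \<Rightarrow> (nat \<Rightarrow> nat set \<Rightarrow> real) \<Rightarrow> nat \<Rightarrow> nat set"
  assumes "k \<ge> 2"
    and "SOS_valuations n m k v"
    and "argmax_rule n m sel"
  shows "universal_expost_IC_IR n k v (kHL n k v sel)
       \<and> (\<forall>s\<in>profiles n k.
            measure_pmf.expectation (kHL n k v sel) (\<lambda>M. welfare n v M s)
              \<ge> OPT n m v s / (real k + 3))"
proof
  show "universal_expost_IC_IR n k v (kHL n k v sel)"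
    using kHL_universal_expost_IC_IR[OF assms] .
  show "\<forall>s\<in>profiles n k. measure_pmf.expectation (kHL n k v sel) (\<lambda>M. welfare n v M s)
          \<ge> OPT n m v s / (real k + 3)"
  proof
    fix s assume "s \<in> profiles n k"
    then show "measure_pmf.expectation (kHL n k v sel) (\<lambda>M. welfare n v M s) \<ge> OPT n m v s / (real k + 3)"
      unfolding expectation_kHL[OF assms(1)]
      by (intro divide_right_mono OPT_le_threshold_plus_sampling_welfare[OF assms(2,3)]) simp_all
  qed
qed

end
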